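(* Let $(\Omega,\mathcal{F})$ be a measurable space, $\{X_n:n\ge1\}$ a $\sigma$-logically independent sequence of real-valued random variables, and for each $n$ let $P_n$ be a probability measure on $(\Omega,\sigma(X_n))$ under which $X_n$ has finite variance $\sigma^2_{P_n}(X_n)$. Let $B_n^2=\sum_{i=1}^n\sigma^2_{P_i}(X_i)$. If $\lim_{n\to\infty}B_n^2=\infty$ and for every $\varepsilon>0$ \[ \lim_{n\to\infty}\frac1{B_n^2}\sum_{i=1}^nE_{P_i}\Big[(X_i-E_{P_i}[X_i])^2\,\mathbf 1_{\{|X_i-E_{P_i}[X_i]|>\varepsilon B_n\}}\Big]=0, \] then there exists a probability measure $P$ on $\big(\Omega,\sigma(\{\sigma(X_n):n\ge1\})\big)$ such that \[ \lim_{n\to\infty}P\Big(\frac{\sum_{i=1}^n(X_i-E_P[X_i])}{B_n}\le x\Big)=\int_{-\infty}^x\frac1{\sqrt{2\pi}}e^{-t^2/2}\,dt\quad\text{for all }x\in\mathbb{R}. \]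
   Context: A set $A$ is nontrivial if $A\neq\emptyset$, $A\neq\Omega$. A family of sub-$\sigma$-algebras $\{\mathcal{F}_i:i\in I\}$ is $\sigma$-logically independent if for every finite or countably infinite set of distinct indices $\{i_j\}\subset I$ and every choice of nontrivial $A_{i_j}\in\mathcal{F}_{i_j}$, $\bigcap_jA_{i_j}\neq\emptyset$. A family of random variables $\{X_i\}$ is $\sigma$-logically independent if $\{\sigma(X_i)\}$ is $\sigma$-logically independent (each $\sigma(X_i)$ assumed nontrivial). *)

theory Defs
  imports "HOL-Probability.Probability"
begin

definition nontrivial_set :: "'a set \<Rightarrow> 'a set \<Rightarrow> bool" where
  "nontrivial_set \<Omega> A \<longleftrightarrow> A \<noteq> {} \<and> A \<noteq> \<Omega>"

definition sigma_logically_independent ::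
  "'a set \<Rightarrow> ('i \<Rightarrow> 'a measure) \<Rightarrow> 'i set \<Rightarrow> bool" where
  "sigma_logically_independent \<Omega> F I \<longleftrightarrow>
     (\<forall>J A. J \<subseteq> I \<longrightarrow> J \<noteq> {} \<longrightarrow> countable J \<longrightarrow>
        (\<forall>j\<in>J. A j \<in> sets (F j) \<and> nontrivial_set \<Omega> (A j)) \<longrightarrow>
        (\<Inter>j\<in>J. A j) \<noteq> {})"

definition sigma_rv :: "'a measure \<Rightarrow> ('a \<Rightarrow> real) \<Rightarrow> 'a measure" where
  "sigma_rv M X = vimage_algebra (space M) X borel"

definition sigma_logically_independent_rv ::
  "'a measure \<Rightarrow> ('i \<Rightarrow> 'a \<Rightarrow> real) \<Rightarrow> 'i set \<Rightarrow> bool" where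
  "sigma_logically_independent_rv M X I \<longleftrightarrow>
     (\<forall>i\<in>I. \<exists>A\<in>sets (sigma_rv M (X i)). nontrivial_set (space M) A) \<and>
     sigma_logically_independent (space M) (\<lambda>i. sigma_rv M (X i)) I"

end

theory Submission
  imports Defs
begin

(*
  Logical independence says that values which the X i can take separately are taken
  simultaneously at some single point of the sample space. Hence each point of the product
  space of the (\<Omega>, \<sigma>(X i), P i) is realised, as far as the X i can see, by a point g \<omega> of \<Omega>;
  such a g is automatically measurable for \<sigma>(X i : i \<ge> 1), and the image P of the product
  measure under g makes the X i independent with the same laws as under the P i.
  The theorem is then Lindeberg's central limit theorem under P, proved with characteristic
  functions: by the Lindeberg condition the characteristic functions of the X i / B n differ
  from 1 - t\<^sup>2 \<sigma>\<^sub>i\<^sup>2 / (2 B n\<^sup>2) by errors whose sum tends to 0, while max\<^sub>i \<sigma>\<^sub>i\<^sup>2 / B n\<^sup>2 \<rightarrow> 0;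
  so their product tends to exp (- t\<^sup>2 / 2), and Levy's continuity theorem gives
  convergence of the distribution functions.
*)

section \<open>Lindeberg's central limit theorem\<close>

lemma exp_minus_linear_approx:
  fixes a :: real
  assumes "0 \<le> a"
  shows "\<bar>exp (- a) - (1 - a)\<bar> \<le> a\<^sup>2 / 2"
proof -
  have lower: "1 - a \<le> exp (- a)"
    using exp_ge_add_one_self[of "- a"] by simp
  have taylor: "1 + a + a\<^sup>2 / 2 \<le> exp a"
    by (rule exp_lower_Taylor_quadratic) fact
  have pos: "0 < 1 + a + a\<^sup>2 / 2"
    using assms by (simp add: add_pos_nonneg)
  have "(1 + a + a\<^sup>2 / 2) * (1 - a + a\<^sup>2 / 2) = 1 + a ^ 4 / 4"
    by (simp add: algebra_simps power2_eq_square power4_eq_xxxx)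
  then have "1 \<le> (1 + a + a\<^sup>2 / 2) * (1 - a + a\<^sup>2 / 2)"
    by simp
  then have "1 / (1 + a + a\<^sup>2 / 2) \<le> 1 - a + a\<^sup>2 / 2"
    using pos by (simp add: divide_le_eq mult.commute)
  moreover have "exp (- a) \<le> 1 / (1 + a + a\<^sup>2 / 2)"
    using taylor pos by (simp add: exp_minus_inverse exp_minus divide_simps)
  ultimately show ?thesis
    using lower by simp
qed

lemma (in prob_space) second_moment_le_truncated:
  fixes Y :: "'a \<Rightarrow> real"
  assumes [measurable]: "Y \<in> borel_measurable M" and sq: "integrable M (\<lambda>x. (Y x)\<^sup>2)"
    and "0 \<le> c"
  shows "expectation (\<lambda>x. (Y x)\<^sup>2) \<le> c\<^sup>2 + expectation (\<lambda>x. (Y x)\<^sup>2 * indicator {x. c < \<bar>Y x\<bar>} x)"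
proof -
  have tail: "integrable M (\<lambda>x. (Y x)\<^sup>2 * indicator {x. c < \<bar>Y x\<bar>} x)"
    by (rule Bochner_Integration.integrable_bound[OF sq]) (auto split: split_indicator)
  have "expectation (\<lambda>x. (Y x)\<^sup>2) \<le> expectation (\<lambda>x. c\<^sup>2 + (Y x)\<^sup>2 * indicator {x. c < \<bar>Y x\<bar>} x)"
  proof (rule integral_mono[OF sq])
    show "integrable M (\<lambda>x. c\<^sup>2 + (Y x)\<^sup>2 * indicator {x. c < \<bar>Y x\<bar>} x)"
      using tail by simp
    show "(Y x)\<^sup>2 \<le> c\<^sup>2 + (Y x)\<^sup>2 * indicator {x. c < \<bar>Y x\<bar>} x" for x
      using \<open>0 \<le> c\<close> abs_le_square_iff[of "Y x" c] by (auto split: split_indicator)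
  qed
  also have "\<dots> = c\<^sup>2 + expectation (\<lambda>x. (Y x)\<^sup>2 * indicator {x. c < \<bar>Y x\<bar>} x)"
    using tail by (simp add: prob_space)
  finally show ?thesis .
qed

lemma (in prob_space) char_approx_truncated:
  fixes Y :: "'a \<Rightarrow> real" and b \<epsilon> t :: real
  assumes [measurable]: "Y \<in> borel_measurable M" and sq: "integrable M (\<lambda>x. (Y x)\<^sup>2)"
    and mean0: "expectation Y = 0" and "0 < b" and "0 < \<epsilon>"
  defines "s \<equiv> expectation (\<lambda>x. (Y x)\<^sup>2)"
    and "l \<equiv> expectation (\<lambda>x. (Y x)\<^sup>2 * indicator {x. \<epsilon> * b < \<bar>Y x\<bar>} x)"
  shows "cmod (char (distr M borel (\<lambda>x. Y x / b)) t - (1 - t\<^sup>2 * (s / b\<^sup>2) / 2))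
           \<le> t\<^sup>2 / 6 * (\<bar>t\<bar> * \<epsilon> * s / b\<^sup>2 + 6 * l / b\<^sup>2)"
proof -
  let ?Z = "\<lambda>x. Y x / b"
  let ?tail = "\<lambda>x. (Y x)\<^sup>2 * indicator {x. \<epsilon> * b < \<bar>Y x\<bar>} x"
  have tail: "integrable M ?tail"
    by (rule Bochner_Integration.integrable_bound[OF sq]) (auto split: split_indicator)
  have "cmod (char (distr M borel ?Z) t - (1 - t\<^sup>2 * (s / b\<^sup>2) / 2))
      \<le> t\<^sup>2 / 6 * expectation (\<lambda>x. min (6 * (?Z x)\<^sup>2) (\<bar>t\<bar> * \<bar>?Z x\<bar> ^ 3))"
  proof (rule char_approx3')
    show "integrable M ?Z"
      using square_integrable_imp_integrable[OF _ sq] by simp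
    show "integrable M (\<lambda>x. (?Z x)\<^sup>2)"
      using sq by (simp add: power_divide)
    show "expectation ?Z = 0" "variance ?Z = s / b\<^sup>2"
      using mean0 by (simp_all add: power_divide s_def)
  qed auto
  also have "expectation (\<lambda>x. min (6 * (?Z x)\<^sup>2) (\<bar>t\<bar> * \<bar>?Z x\<bar> ^ 3))
      \<le> expectation (\<lambda>x. \<bar>t\<bar> * \<epsilon> / b\<^sup>2 * (Y x)\<^sup>2 + 6 / b\<^sup>2 * ?tail x)"
  proof (rule integral_mono)
    show "integrable M (\<lambda>x. min (6 * (?Z x)\<^sup>2) (\<bar>t\<bar> * \<bar>?Z x\<bar> ^ 3))"
      by (rule Bochner_Integration.integrable_bound[where f="\<lambda>x. 6 / b\<^sup>2 * (Y x)\<^sup>2"])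
         (use sq in \<open>auto simp: power_divide\<close>)
    show "integrable M (\<lambda>x. \<bar>t\<bar> * \<epsilon> / b\<^sup>2 * (Y x)\<^sup>2 + 6 / b\<^sup>2 * ?tail x)"
      using sq tail by auto
    fix x
    show "min (6 * (?Z x)\<^sup>2) (\<bar>t\<bar> * \<bar>?Z x\<bar> ^ 3) \<le> \<bar>t\<bar> * \<epsilon> / b\<^sup>2 * (Y x)\<^sup>2 + 6 / b\<^sup>2 * ?tail x"
    proof (cases "\<epsilon> * b < \<bar>Y x\<bar>")
      case True
      have "0 \<le> \<bar>t\<bar> * \<epsilon> / b\<^sup>2 * (Y x)\<^sup>2"
        using \<open>0 < \<epsilon>\<close> by simp
      then show ?thesis
        using True by (simp add: power_divide min.coboundedI1)
    next
      case False
      then have "\<bar>Y x\<bar> / b \<le> \<epsilon>"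
        using \<open>0 < b\<close> by (simp add: divide_le_eq mult.commute)
      have "\<bar>t\<bar> * \<bar>?Z x\<bar> ^ 3 = \<bar>t\<bar> * (\<bar>Y x\<bar> / b) * (Y x)\<^sup>2 / b\<^sup>2"
        using \<open>0 < b\<close> by (simp add: power_divide power3_eq_cube power2_eq_square)
      also have "\<dots> \<le> \<bar>t\<bar> * \<epsilon> * (Y x)\<^sup>2 / b\<^sup>2"
        using \<open>\<bar>Y x\<bar> / b \<le> \<epsilon>\<close> by (intro divide_right_mono mult_right_mono mult_left_mono) auto
      finally show ?thesis
        using False by (simp add: min.coboundedI2)
    qed
  qed
  also have "\<dots> = \<bar>t\<bar> * \<epsilon> * s / b\<^sup>2 + 6 * l / b\<^sup>2"
    unfolding s_def l_def using sq tail by simp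
  finally show ?thesis
    by (simp add: mult_left_mono)
qed

lemma norm_prod_sub_exp_sum_le:
  fixes c :: "'i \<Rightarrow> complex" and a :: "'i \<Rightarrow> real"
  assumes "\<And>i. i \<in> A \<Longrightarrow> cmod (c i) \<le> 1" and "\<And>i. i \<in> A \<Longrightarrow> 0 \<le> a i"
  shows "cmod ((\<Prod>i\<in>A. c i) - exp (- (\<Sum>i\<in>A. a i)))
           \<le> (\<Sum>i\<in>A. cmod (c i - (1 - a i)) + (a i)\<^sup>2 / 2)"
proof -
  have "exp (- (\<Sum>i\<in>A. a i)) = (\<Prod>i\<in>A. exp (- a i))"
    by (cases "finite A") (simp_all add: exp_sum flip: sum_negf)
  then have "cmod ((\<Prod>i\<in>A. c i) - exp (- (\<Sum>i\<in>A. a i)))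
      = cmod ((\<Prod>i\<in>A. c i) - (\<Prod>i\<in>A. complex_of_real (exp (- a i))))"
    by simp
  also have "\<dots> \<le> (\<Sum>i\<in>A. cmod (c i - exp (- a i)))"
    using assms by (intro norm_prod_diff) auto
  also have "\<dots> \<le> (\<Sum>i\<in>A. cmod (c i - (1 - a i)) + (a i)\<^sup>2 / 2)"
  proof (rule sum_mono)
    fix i assume "i \<in> A"
    have "cmod (c i - exp (- a i)) = cmod ((c i - (1 - a i)) - of_real (exp (- a i) - (1 - a i)))"
      by simp
    also have "\<dots> \<le> cmod (c i - (1 - a i)) + \<bar>exp (- a i) - (1 - a i)\<bar>"
      using norm_triangle_ineq4 by (metis norm_of_real)
    finally show "cmod (c i - exp (- a i)) \<le> cmod (c i - (1 - a i)) + (a i)\<^sup>2 / 2"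
      using exp_minus_linear_approx[OF assms(2)[OF \<open>i \<in> A\<close>]] by linarith
  qed
  finally show ?thesis .
qed

lemma (in prob_space) char_normalized_sum_approx:
  fixes Y :: "'i \<Rightarrow> 'a \<Rightarrow> real" and A :: "'i set" and \<epsilon> t :: real
  assumes indep: "indep_vars (\<lambda>_. borel) Y A"
    and sq: "\<And>i. i \<in> A \<Longrightarrow> integrable M (\<lambda>x. (Y i x)\<^sup>2)"
    and mean0: "\<And>i. i \<in> A \<Longrightarrow> expectation (Y i) = 0"
    and "0 < \<epsilon>"
  defines "b2 \<equiv> \<Sum>i\<in>A. expectation (\<lambda>x. (Y i x)\<^sup>2)"
  defines "L \<equiv> (1 / b2) * (\<Sum>i\<in>A. expectation (\<lambda>x. (Y i x)\<^sup>2 * indicator {x. \<epsilon> * sqrt b2 < \<bar>Y i x\<bar>} x))"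
  assumes "0 < b2"
  shows "cmod (char (distr M borel (\<lambda>x. (\<Sum>i\<in>A. Y i x) / sqrt b2)) t - exp (- t\<^sup>2 / 2))
           \<le> t\<^sup>2 / 6 * (\<bar>t\<bar> * \<epsilon> + 6 * L) + t ^ 4 * (\<epsilon>\<^sup>2 + L) / 8"
proof -
  have "finite A"
    using \<open>0 < b2\<close> sum.infinite unfolding b2_def by fastforce
  define b where "b = sqrt b2"
  have "0 < b" and b2_eq: "b\<^sup>2 = b2"
    using \<open>0 < b2\<close> by (simp_all add: b_def)
  have Y_meas: "Y i \<in> borel_measurable M" if "i \<in> A" for i
    using indep that unfolding indep_vars_def2 by auto
  define s where "s i = expectation (\<lambda>x. (Y i x)\<^sup>2)" for i
  define l where "l i = expectation (\<lambda>x. (Y i x)\<^sup>2 * indicator {x. \<epsilon> * b < \<bar>Y i x\<bar>} x)" for i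
  define a where "a i = t\<^sup>2 * (s i / b\<^sup>2) / 2" for i
  have l_nonneg: "0 \<le> l i" for i
    unfolding l_def by (rule integral_nonneg_AE) (auto split: split_indicator)
  have a_nonneg: "0 \<le> a i" for i
    unfolding a_def s_def by (simp add: integral_nonneg_AE)
  have sum_s: "(\<Sum>i\<in>A. s i) = b2" and sum_l: "(\<Sum>i\<in>A. l i) = L * b2"
    using \<open>0 < b2\<close> by (simp_all add: s_def l_def b2_def L_def b_def)
  have sum_a: "(\<Sum>i\<in>A. a i) = t\<^sup>2 / 2"
    using sum_s b2_eq \<open>0 < b2\<close> by (simp add: a_def flip: sum_divide_distrib sum_distrib_left)
  have a_le: "a i \<le> t\<^sup>2 * (\<epsilon>\<^sup>2 + L) / 2" if "i \<in> A" for i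
  proof -
    have "s i \<le> (\<epsilon> * b)\<^sup>2 + l i"
      unfolding s_def l_def using Y_meas[OF that] sq[OF that] \<open>0 < \<epsilon>\<close> \<open>0 < b\<close>
      by (intro second_moment_le_truncated) auto
    also have "l i \<le> L * b2"
      unfolding sum_l[symmetric] using that l_nonneg \<open>finite A\<close> by (intro member_le_sum) auto
    finally have "s i / b\<^sup>2 \<le> \<epsilon>\<^sup>2 + L"
      using b2_eq \<open>0 < b2\<close> by (simp add: divide_le_eq algebra_simps power_mult_distrib)
    then show ?thesis
      unfolding a_def by (intro divide_right_mono mult_left_mono) auto
  qed
  have "char (distr M borel (\<lambda>x. (\<Sum>i\<in>A. Y i x) / sqrt b2)) t
      = char (distr M borel (\<lambda>x. \<Sum>i\<in>A. Y i x / b)) t"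
    by (simp add: b_def sum_divide_distrib)
  also have "\<dots> = (\<Prod>i\<in>A. char (distr M borel (\<lambda>x. Y i x / b)) t)"
    by (intro char_distr_sum indep_vars_compose2[OF indep]) auto
  finally have "cmod (char (distr M borel (\<lambda>x. (\<Sum>i\<in>A. Y i x) / sqrt b2)) t - exp (- t\<^sup>2 / 2))
      = cmod ((\<Prod>i\<in>A. char (distr M borel (\<lambda>x. Y i x / b)) t) - exp (- (\<Sum>i\<in>A. a i)))"
    by (simp add: sum_a)
  also have "\<dots> \<le> (\<Sum>i\<in>A. cmod (char (distr M borel (\<lambda>x. Y i x / b)) t - (1 - a i)) + (a i)\<^sup>2 / 2)"
    using a_nonneg Y_meas
    by (intro norm_prod_sub_exp_sum_le real_distribution.cmod_char_le_1 real_distribution_distr) auto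
  also have "\<dots> \<le> (\<Sum>i\<in>A. t\<^sup>2 / 6 * (\<bar>t\<bar> * \<epsilon> * s i / b\<^sup>2 + 6 * l i / b\<^sup>2) + a i * (t\<^sup>2 * (\<epsilon>\<^sup>2 + L) / 4))"
  proof (rule sum_mono)
    fix i assume "i \<in> A"
    have "(a i)\<^sup>2 / 2 \<le> a i * (t\<^sup>2 * (\<epsilon>\<^sup>2 + L) / 4)"
      using mult_left_mono[OF a_le[OF \<open>i \<in> A\<close>] a_nonneg[of i]] by (simp add: power2_eq_square)
    moreover have "cmod (char (distr M borel (\<lambda>x. Y i x / b)) t - (1 - a i))
        \<le> t\<^sup>2 / 6 * (\<bar>t\<bar> * \<epsilon> * s i / b\<^sup>2 + 6 * l i / b\<^sup>2)"
      unfolding a_def s_def l_def using \<open>i \<in> A\<close> \<open>0 < b\<close> \<open>0 < \<epsilon>\<close>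
      by (intro char_approx_truncated Y_meas sq mean0) auto
    ultimately show "cmod (char (distr M borel (\<lambda>x. Y i x / b)) t - (1 - a i)) + (a i)\<^sup>2 / 2
        \<le> t\<^sup>2 / 6 * (\<bar>t\<bar> * \<epsilon> * s i / b\<^sup>2 + 6 * l i / b\<^sup>2) + a i * (t\<^sup>2 * (\<epsilon>\<^sup>2 + L) / 4)"
      by linarith
  qed
  also have "\<dots> = (\<Sum>i\<in>A. t\<^sup>2 * \<bar>t\<bar> * \<epsilon> / (6 * b\<^sup>2) * s i + t\<^sup>2 / b\<^sup>2 * l i
      + t\<^sup>2 * (\<epsilon>\<^sup>2 + L) / 4 * a i)"
    by (rule sum.cong) (simp_all add: field_simps)
  also have "\<dots> = t\<^sup>2 * \<bar>t\<bar> * \<epsilon> / (6 * b\<^sup>2) * (\<Sum>i\<in>A. s i) + t\<^sup>2 / b\<^sup>2 * (\<Sum>i\<in>A. l i)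
      + t\<^sup>2 * (\<epsilon>\<^sup>2 + L) / 4 * (\<Sum>i\<in>A. a i)"
    by (simp add: sum.distrib sum_distrib_left)
  also have "\<dots> = t\<^sup>2 / 6 * (\<bar>t\<bar> * \<epsilon> + 6 * L) + t ^ 4 * (\<epsilon>\<^sup>2 + L) / 8"
    unfolding sum_s sum_l sum_a b2_eq using \<open>0 < b2\<close>
    by (simp add: field_simps power2_eq_square power4_eq_xxxx)
  finally show ?thesis .
qed

theorem (in prob_space) lindeberg_clt:
  fixes Y :: "nat \<Rightarrow> 'a \<Rightarrow> real"
  defines "B2 \<equiv> \<lambda>n. \<Sum>i\<in>{1..n}. expectation (\<lambda>x. (Y i x)\<^sup>2)"
  assumes indep: "indep_vars (\<lambda>_. borel) Y {1..}"
    and sq: "\<And>i. 1 \<le> i \<Longrightarrow> integrable M (\<lambda>x. (Y i x)\<^sup>2)"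
    and mean0: "\<And>i. 1 \<le> i \<Longrightarrow> expectation (Y i) = 0"
    and B2_inf: "filterlim B2 at_top sequentially"
    and Lindeberg: "\<And>\<epsilon>. 0 < \<epsilon> \<Longrightarrow> (\<lambda>n. (1 / B2 n) * (\<Sum>i\<in>{1..n}.
           expectation (\<lambda>x. (Y i x)\<^sup>2 * indicator {x. \<epsilon> * sqrt (B2 n) < \<bar>Y i x\<bar>} x))) \<longlonglongrightarrow> 0"
  shows "weak_conv_m (\<lambda>n. distr M borel (\<lambda>x. (\<Sum>i\<in>{1..n}. Y i x) / sqrt (B2 n)))
           std_normal_distribution"
proof (rule levy_continuity)
  have [measurable]: "Y i \<in> borel_measurable M" if "i \<in> {1..}" for i
    using indep that unfolding indep_vars_def2 by auto
  show "real_distribution (distr M borel (\<lambda>x. (\<Sum>i\<in>{1..n}. Y i x) / sqrt (B2 n)))" for n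
    by (intro real_distribution_distr) simp
  show "real_distribution std_normal_distribution"
    by (rule real_dist_normal_dist)
next
  fix t :: real
  define L where "L \<epsilon> n = (1 / B2 n) * (\<Sum>i\<in>{1..n}.
    expectation (\<lambda>x. (Y i x)\<^sup>2 * indicator {x. \<epsilon> * sqrt (B2 n) < \<bar>Y i x\<bar>} x))" for \<epsilon> n
  define K where "K = t\<^sup>2 * \<bar>t\<bar> / 6 + t ^ 4 / 8 + t\<^sup>2 + 1"
  have "0 < K"
    unfolding K_def by (simp add: add_nonneg_pos)
  have bound: "cmod (char (distr M borel (\<lambda>x. (\<Sum>i\<in>{1..n}. Y i x) / sqrt (B2 n))) t - exp (- t\<^sup>2 / 2))
      \<le> K * (\<epsilon> + \<bar>L \<epsilon> n\<bar>)" if "0 < \<epsilon>" "\<epsilon> \<le> 1" "0 < B2 n" for \<epsilon> n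
  proof -
    have "\<epsilon>\<^sup>2 \<le> \<epsilon>"
      using that by (simp add: power2_eq_square mult_le_cancel_left1)
    have "cmod (char (distr M borel (\<lambda>x. (\<Sum>i\<in>{1..n}. Y i x) / sqrt (B2 n))) t - exp (- t\<^sup>2 / 2))
        \<le> t\<^sup>2 / 6 * (\<bar>t\<bar> * \<epsilon> + 6 * L \<epsilon> n) + t ^ 4 * (\<epsilon>\<^sup>2 + L \<epsilon> n) / 8"
      unfolding L_def B2_def using that indep sq mean0
      by (intro char_normalized_sum_approx) (auto simp: B2_def intro: indep_vars_subset)
    also have "\<dots> = t\<^sup>2 * \<bar>t\<bar> / 6 * \<epsilon> + t ^ 4 / 8 * \<epsilon>\<^sup>2 + (t\<^sup>2 + t ^ 4 / 8) * L \<epsilon> n"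
      by (simp add: algebra_simps power2_eq_square power3_eq_cube power4_eq_xxxx)
    also have "\<dots> \<le> (t\<^sup>2 * \<bar>t\<bar> / 6 + t ^ 4 / 8) * \<epsilon> + (t\<^sup>2 + t ^ 4 / 8) * \<bar>L \<epsilon> n\<bar>"
      using mult_left_mono[OF \<open>\<epsilon>\<^sup>2 \<le> \<epsilon>\<close>, of "t ^ 4"]
      by (intro add_mono mult_left_mono) (auto simp: algebra_simps)
    also have "\<dots> \<le> K * \<epsilon> + K * \<bar>L \<epsilon> n\<bar>"
      unfolding K_def using \<open>0 < \<epsilon>\<close>
      by (intro add_mono[OF mult_right_mono mult_right_mono]) auto
    finally show ?thesis
      by (simp add: distrib_left)
  qed
  have "(\<lambda>n. char (distr M borel (\<lambda>x. (\<Sum>i\<in>{1..n}. Y i x) / sqrt (B2 n))) t) \<longlonglongrightarrow> exp (- t\<^sup>2 / 2)"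
  proof (rule tendstoI)
    fix \<delta> :: real assume "0 < \<delta>"
    define \<epsilon> where "\<epsilon> = min 1 (\<delta> / (2 * K))"
    have \<epsilon>: "0 < \<epsilon>" "\<epsilon> \<le> 1" "K * \<epsilon> \<le> \<delta> / 2"
      using \<open>0 < \<delta>\<close> \<open>0 < K\<close> by (auto simp: \<epsilon>_def min_def field_simps)
    have "eventually (\<lambda>n. \<bar>L \<epsilon> n\<bar> < \<delta> / (2 * K)) sequentially"
      using tendstoD[OF Lindeberg[OF \<open>0 < \<epsilon>\<close>], of "\<delta> / (2 * K)"] \<open>0 < \<delta>\<close> \<open>0 < K\<close>
      by (simp add: L_def[abs_def] dist_real_def)
    moreover have "eventually (\<lambda>n. 0 < B2 n) sequentially"
      using B2_inf by (simp add: filterlim_at_top_dense)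
    ultimately show "eventually (\<lambda>n. dist (char (distr M borel (\<lambda>x. (\<Sum>i\<in>{1..n}. Y i x) / sqrt (B2 n))) t)
        (exp (- t\<^sup>2 / 2)) < \<delta>) sequentially"
    proof eventually_elim
      case (elim n)
      then have "K * \<bar>L \<epsilon> n\<bar> < \<delta> / 2"
        using \<open>0 < K\<close> by (simp add: field_simps)
      then show ?case
        using bound[OF \<epsilon>(1,2) elim(2)] \<epsilon>(3) by (simp add: dist_norm algebra_simps)
    qed
  qed
  then show "(\<lambda>n. char (distr M borel (\<lambda>x. (\<Sum>i\<in>{1..n}. Y i x) / sqrt (B2 n))) t)
      \<longlonglongrightarrow> char std_normal_distribution t"
    by (simp add: char_std_normal_distribution)
qed

lemma std_normal_distribution_atMost:
  "measure std_normal_distribution {..x} = (LBINT t:{..x}. exp (- t\<^sup>2 / 2) / sqrt (2 * pi))"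
proof -
  interpret real_distribution std_normal_distribution
    by (rule real_dist_normal_dist)
  have "measure std_normal_distribution {..x} = (\<integral>t. indicator {..x} t \<partial>std_normal_distribution)"
    by simp
  also have "\<dots> = (\<integral>t. std_normal_density t * indicator {..x} t \<partial>lborel)"
    by (subst integral_density) auto
  also have "\<dots> = (LBINT t:{..x}. exp (- t\<^sup>2 / 2) / sqrt (2 * pi))"
    unfolding set_lebesgue_integral_def
    by (intro Bochner_Integration.integral_cong) (auto simp: std_normal_density_def split: split_indicator)
  finally show ?thesis .
qed

lemma isCont_cdf_std_normal_distribution: "isCont (cdf std_normal_distribution) x"
proof -
  interpret real_distribution std_normal_distribution
    by (rule real_dist_normal_dist)
  have "AE t in lborel. t \<in> {x} \<longrightarrow> std_normal_density t = 0"
    using AE_lborel_singleton[of x] by eventually_elim simp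
  then have "{x} \<in> null_sets std_normal_distribution"
    by (subst null_sets_density_iff) auto
  then show ?thesis
    by (simp add: isCont_cdf measure_def null_setsD1)
qed

lemma (in finite_measure) integrable_square_diff_const:
  fixes X :: "'a \<Rightarrow> real"
  assumes "X \<in> borel_measurable M" and "integrable M (\<lambda>x. (X x)\<^sup>2)"
  shows "integrable M (\<lambda>x. (X x - c)\<^sup>2)"
proof -
  have "integrable M (\<lambda>x. (X x)\<^sup>2 - 2 * c * X x + c\<^sup>2)"
    using assms square_integrable_imp_integrable[OF assms] by auto
  then show ?thesis
    by (simp add: power2_diff algebra_simps)
qed

theorem (in prob_space) lindeberg_clt_cdf:
  fixes X :: "nat \<Rightarrow> 'a \<Rightarrow> real"
  defines "B2 \<equiv> \<lambda>n. \<Sum>i\<in>{1..n}. expectation (\<lambda>x. (X i x - expectation (X i))\<^sup>2)"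
  assumes indep: "indep_vars (\<lambda>_. borel) X {1..}"
    and sq: "\<And>i. 1 \<le> i \<Longrightarrow> integrable M (\<lambda>x. (X i x)\<^sup>2)"
    and B2_inf: "filterlim B2 at_top sequentially"
    and Lindeberg: "\<And>\<epsilon>. 0 < \<epsilon> \<Longrightarrow> (\<lambda>n. (1 / B2 n) * (\<Sum>i\<in>{1..n}.
           expectation (\<lambda>x. (X i x - expectation (X i))\<^sup>2 *
             indicator {x. \<epsilon> * sqrt (B2 n) < \<bar>X i x - expectation (X i)\<bar>} x))) \<longlonglongrightarrow> 0"
  shows "(\<lambda>n. prob {x \<in> space M. (\<Sum>i\<in>{1..n}. X i x - expectation (X i)) / sqrt (B2 n) \<le> y})
           \<longlonglongrightarrow> (LBINT t:{..y}. exp (- t\<^sup>2 / 2) / sqrt (2 * pi))"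
proof -
  define Y where "Y i x = X i x - expectation (X i)" for i x
  have X_meas: "X i \<in> borel_measurable M" if "1 \<le> i" for i
    using indep that unfolding indep_vars_def2 by auto
  have "weak_conv_m (\<lambda>n. distr M borel (\<lambda>x. (\<Sum>i\<in>{1..n}. Y i x) /
      sqrt (\<Sum>i\<in>{1..n}. expectation (\<lambda>x. (Y i x)\<^sup>2)))) std_normal_distribution"
  proof (rule lindeberg_clt)
    show "indep_vars (\<lambda>_. borel) Y {1..}"
      unfolding Y_def using indep by (rule indep_vars_compose2[where Y="\<lambda>i v. v - expectation (X i)"]) simp
    show "integrable M (\<lambda>x. (Y i x)\<^sup>2)" if "1 \<le> i" for i
      unfolding Y_def using X_meas[OF that] sq[OF that] by (rule integrable_square_diff_const)
    show "expectation (Y i) = 0" if "1 \<le> i" for i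
      unfolding Y_def using square_integrable_imp_integrable[OF X_meas[OF that] sq[OF that]]
      by (simp add: prob_space)
  qed (use B2_inf Lindeberg in \<open>simp_all add: Y_def B2_def\<close>)
  then have "(\<lambda>n. cdf (distr M borel (\<lambda>x. (\<Sum>i\<in>{1..n}. Y i x) / sqrt (B2 n))) y)
      \<longlonglongrightarrow> cdf std_normal_distribution y"
    using isCont_cdf_std_normal_distribution unfolding weak_conv_m_def weak_conv_def Y_def B2_def
    by blast
  moreover have "cdf (distr M borel (\<lambda>x. (\<Sum>i\<in>{1..n}. Y i x) / sqrt (B2 n))) y
      = prob {x \<in> space M. (\<Sum>i\<in>{1..n}. X i x - expectation (X i)) / sqrt (B2 n) \<le> y}" for n
    using X_meas unfolding cdf_def Y_def
    by (subst measure_distr) (auto intro!: arg_cong[where f=prob])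
  ultimately show ?thesis
    by (simp add: cdf_def std_normal_distribution_atMost)
qed

lemma
  fixes f :: "real \<Rightarrow> real"
  assumes "distr M borel X = distr N borel Y"
    and "X \<in> borel_measurable M" "Y \<in> borel_measurable N" "f \<in> borel_measurable borel"
  shows integral_comp_eq_of_distr_eq: "(\<integral>x. f (X x) \<partial>M) = (\<integral>x. f (Y x) \<partial>N)"
    and integrable_comp_iff_of_distr_eq: "integrable M (\<lambda>x. f (X x)) \<longleftrightarrow> integrable N (\<lambda>x. f (Y x))"
  using assms by (metis integral_distr, metis integrable_distr_eq)

theorem (in prob_space) lindeberg_clt_cdf_marginals:
  fixes X :: "nat \<Rightarrow> 'a \<Rightarrow> real" and Pn :: "nat \<Rightarrow> 'a measure"
  defines "m \<equiv> (\<lambda>i. \<integral>\<omega>. X i \<omega> \<partial>Pn i)"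
  defines "B2 \<equiv> (\<lambda>n. \<Sum>i\<in>{1..n}. \<integral>\<omega>. (X i \<omega> - m i)\<^sup>2 \<partial>Pn i)"
  assumes indep: "indep_vars (\<lambda>_. borel) X {1..}"
    and marginals: "\<And>i. i \<in> {1..} \<Longrightarrow> distr M borel (X i) = distr (Pn i) borel (X i)"
    and X_Pn: "\<And>i. 1 \<le> i \<Longrightarrow> X i \<in> borel_measurable (Pn i)"
    and sq: "\<And>i. 1 \<le> i \<Longrightarrow> integrable (Pn i) (\<lambda>\<omega>. (X i \<omega>)\<^sup>2)"
    and B_inf: "filterlim B2 at_top sequentially"
    and Lindeberg: "\<And>\<epsilon>::real. \<epsilon> > 0 \<Longrightarrow>
       (\<lambda>n. (1 / B2 n) * (\<Sum>i\<in>{1..n}. \<integral>\<omega>. (X i \<omega> - m i)\<^sup>2 *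
            indicator {\<omega>. \<bar>X i \<omega> - m i\<bar> > \<epsilon> * sqrt (B2 n)} \<omega> \<partial>Pn i))
        \<longlonglongrightarrow> 0"
  shows "(\<lambda>n. prob {x \<in> space M. (\<Sum>i\<in>{1..n}. X i x - expectation (X i)) / sqrt (B2 n) \<le> y})
           \<longlonglongrightarrow> (LBINT t:{..y}. exp (- t\<^sup>2 / 2) / sqrt (2 * pi))"
proof -
  have X_meas: "X i \<in> borel_measurable M" if "1 \<le> i" for i
    using indep that unfolding indep_vars_def2 by auto
  have integral_eq: "expectation (\<lambda>x. f (X i x)) = (\<integral>\<omega>. f (X i \<omega>) \<partial>Pn i)"
    and integrable_iff: "integrable M (\<lambda>x. f (X i x)) \<longleftrightarrow> integrable (Pn i) (\<lambda>\<omega>. f (X i \<omega>))"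
    if "1 \<le> i" "f \<in> borel_measurable borel" for i and f :: "real \<Rightarrow> real"
    using that by (intro integral_comp_eq_of_distr_eq integrable_comp_iff_of_distr_eq
        marginals X_meas X_Pn; simp)+
  have mean: "expectation (X i) = m i" if "1 \<le> i" for i
    using integral_eq[OF that, of "\<lambda>x. x"] by (simp add: m_def)
  have B2_eq: "B2 = (\<lambda>n. \<Sum>i\<in>{1..n}. expectation (\<lambda>x. (X i x - expectation (X i))\<^sup>2))"
    unfolding B2_def using integral_eq[of _ "\<lambda>x. (x - m _)\<^sup>2"] by (auto simp: mean intro!: sum.cong)
  have tail_eq: "(\<Sum>i\<in>{1..n}. expectation (\<lambda>x. (X i x - expectation (X i))\<^sup>2 *
        indicator {x. c < \<bar>X i x - expectation (X i)\<bar>} x))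
      = (\<Sum>i\<in>{1..n}. \<integral>\<omega>. (X i \<omega> - m i)\<^sup>2 * indicator {\<omega>. \<bar>X i \<omega> - m i\<bar> > c} \<omega> \<partial>Pn i)" for n c
  proof (intro sum.cong refl)
    fix i assume "i \<in> {1..n}"
    then show "expectation (\<lambda>x. (X i x - expectation (X i))\<^sup>2 * indicator {x. c < \<bar>X i x - expectation (X i)\<bar>} x)
        = (\<integral>\<omega>. (X i \<omega> - m i)\<^sup>2 * indicator {\<omega>. \<bar>X i \<omega> - m i\<bar> > c} \<omega> \<partial>Pn i)"
      using integral_eq[of i "\<lambda>x. (x - m i)\<^sup>2 * indicator {x. c < \<bar>x - m i\<bar>} x"]
      by (simp add: mean indicator_def)
  qed
  have sq_M: "integrable M (\<lambda>x. (X i x)\<^sup>2)" if "1 \<le> i" for i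
    using integrable_iff[OF that, of "\<lambda>x. x\<^sup>2"] sq[OF that] by simp
  have Lindeberg_M: "(\<lambda>n. (1 / B2 n) * (\<Sum>i\<in>{1..n}. expectation (\<lambda>x. (X i x - expectation (X i))\<^sup>2 *
      indicator {x. \<epsilon> * sqrt (B2 n) < \<bar>X i x - expectation (X i)\<bar>} x))) \<longlonglongrightarrow> 0" if "0 < \<epsilon>" for \<epsilon>
    unfolding tail_eq using Lindeberg[OF that] by simp
  show ?thesis
    using lindeberg_clt_cdf[OF indep sq_M B_inf[unfolded B2_eq] Lindeberg_M[unfolded B2_eq]]
    unfolding B2_eq .
qed

section \<open>Realising logically independent variables as independent ones\<close>

lemma sets_sigma_rv: "sets (sigma_rv M X) = {X -` A \<inter> space M | A. A \<in> sets borel}"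
  unfolding sigma_rv_def by (rule sets_vimage_algebra2) simp

lemma measurable_sigma_rv: "X \<in> borel_measurable (sigma_rv M X)"
  unfolding sigma_rv_def by (rule measurable_vimage_algebra1) simp

lemma sigma_logically_independent_rv_common_point:
  fixes X :: "'i \<Rightarrow> 'a \<Rightarrow> real"
  assumes indep: "sigma_logically_independent_rv M X I" and "countable I" "I \<noteq> {}"
    and w: "\<And>i. i \<in> I \<Longrightarrow> w i \<in> space M"
  shows "\<exists>\<omega>\<in>space M. \<forall>i\<in>I. X i \<omega> = X i (w i)"
proof -
  define A where "A i = X i -` {X i (w i)} \<inter> space M" for i
  define J where "J = {i \<in> I. A i \<noteq> space M}"
  have A_sets: "A i \<in> sets (sigma_rv M (X i))" for i
    unfolding A_def sets_sigma_rv by (rule CollectI, rule exI[of _ "{X i (w i)}"]) simp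
  have "\<exists>\<omega>\<in>space M. \<forall>i\<in>J. \<omega> \<in> A i"
  proof (cases "J = {}")
    case True
    then show ?thesis
      using w \<open>I \<noteq> {}\<close> by auto
  next
    case False
    \<comment> \<open>The level sets through w that are proper subsets of the space are nontrivial events.\<close>
    have "(\<Inter>i\<in>J. A i) \<noteq> {}"
    proof (rule indep[unfolded sigma_logically_independent_rv_def sigma_logically_independent_def,
          THEN conjunct2, rule_format])
      show "J \<subseteq> I" "J \<noteq> {}" "countable J"
        using False \<open>countable I\<close> unfolding J_def by (auto intro: countable_subset)
      show "A j \<in> sets (sigma_rv M (X j)) \<and> nontrivial_set (space M) (A j)" if "j \<in> J" for j
        using A_sets w that unfolding nontrivial_set_def J_def A_def by auto
    qed
    moreover have "(\<Inter>i\<in>J. A i) \<subseteq> space M"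
      using False unfolding A_def by blast
    ultimately show ?thesis
      by blast
  qed
  then obtain \<omega> where "\<omega> \<in> space M" and in_J: "\<forall>i\<in>J. \<omega> \<in> A i"
    by blast
  have "\<omega> \<in> A i" if "i \<in> I" for i
    using in_J \<open>\<omega> \<in> space M\<close> that unfolding J_def by (cases "A i = space M") auto
  then show ?thesis
    using \<open>\<omega> \<in> space M\<close> unfolding A_def by blast
qed

lemma (in prob_space) indep_vars_distr:
  assumes g: "g \<in> measurable M S" and X: "\<And>i. i \<in> I \<Longrightarrow> X i \<in> measurable S (M' i)"
    and Y: "indep_vars M' Y I" and Y_eq: "\<And>i \<omega>. i \<in> I \<Longrightarrow> \<omega> \<in> space M \<Longrightarrow> Y i \<omega> = X i (g \<omega>)"
    and "I \<noteq> {}"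
  shows "prob_space.indep_vars (distr M S g) M' X I"
proof -
  interpret P: prob_space "distr M S g"
    using g by (rule prob_space_distr)
  have Y_meas: "random_variable (M' i) (Y i)" if "i \<in> I" for i
    using Y that unfolding indep_vars_def2 by auto
  have "distr (distr M S g) (\<Pi>\<^sub>M i\<in>I. M' i) (\<lambda>x. \<lambda>i\<in>I. X i x)
      = distr M (\<Pi>\<^sub>M i\<in>I. M' i) ((\<lambda>x. \<lambda>i\<in>I. X i x) \<circ> g)"
    using g X by (intro distr_distr measurable_restrict) simp_all
  also have "\<dots> = distr M (\<Pi>\<^sub>M i\<in>I. M' i) (\<lambda>\<omega>. \<lambda>i\<in>I. Y i \<omega>)"
    using Y_eq by (intro distr_cong refl restrict_ext) auto
  also have "\<dots> = (\<Pi>\<^sub>M i\<in>I. distr M (M' i) (Y i))"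
    using Y Y_meas \<open>I \<noteq> {}\<close> by (subst (asm) indep_vars_iff_distr_eq_PiM') auto
  also have "\<dots> = (\<Pi>\<^sub>M i\<in>I. distr (distr M S g) (M' i) (X i))"
  proof (intro PiM_cong refl)
    fix i assume "i \<in> I"
    have "distr M (M' i) (Y i) = distr M (M' i) (X i \<circ> g)"
      using Y_eq \<open>i \<in> I\<close> by (intro distr_cong refl) auto
    also have "\<dots> = distr (distr M S g) (M' i) (X i)"
      using g X \<open>i \<in> I\<close> by (intro distr_distr[symmetric]) auto
    finally show "distr M (M' i) (Y i) = distr (distr M S g) (M' i) (X i)" .
  qed
  finally show ?thesis
    using X \<open>I \<noteq> {}\<close> by (subst P.indep_vars_iff_distr_eq_PiM') auto
qed

lemma indep_vars_PiM_components:
  assumes N: "\<And>i. i \<in> I \<Longrightarrow> prob_space (N i)" and "I \<noteq> {}"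
  shows "prob_space.indep_vars (\<Pi>\<^sub>M i\<in>I. N i) N (\<lambda>i \<omega>. \<omega> i) I"
proof -
  interpret prob_space "\<Pi>\<^sub>M i\<in>I. N i"
    using N by (rule prob_space_PiM)
  have "distr (\<Pi>\<^sub>M i\<in>I. N i) (\<Pi>\<^sub>M i\<in>I. N i) (\<lambda>\<omega>. \<lambda>i\<in>I. \<omega> i)
      = distr (\<Pi>\<^sub>M i\<in>I. N i) (\<Pi>\<^sub>M i\<in>I. N i) (\<lambda>\<omega>. \<omega>)"
    by (intro distr_cong refl) (auto simp: space_PiM PiE_def extensional_restrict)
  also have "\<dots> = (\<Pi>\<^sub>M i\<in>I. distr (\<Pi>\<^sub>M i\<in>I. N i) (N i) (\<lambda>\<omega>. \<omega> i))"
    using N by (simp add: distr_PiM_component cong: PiM_cong)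
  finally show ?thesis
    using \<open>I \<noteq> {}\<close> by (subst indep_vars_iff_distr_eq_PiM') auto
qed

definition sigma_rv_family :: "'a measure \<Rightarrow> ('i \<Rightarrow> 'a \<Rightarrow> real) \<Rightarrow> 'i set \<Rightarrow> 'a measure" where
  "sigma_rv_family M X I = sigma (space M) (\<Union>i\<in>I. sets (sigma_rv M (X i)))"

lemma sigma_rv_family_generators_subset: "(\<Union>i\<in>I. sets (sigma_rv M (X i))) \<subseteq> Pow (space M)"
  by (auto simp: sets_sigma_rv)

lemma space_sigma_rv_family [simp]: "space (sigma_rv_family M X I) = space M"
  by (simp add: sigma_rv_family_def space_measure_of_conv)

lemma sets_sigma_rv_family:
  "sets (sigma_rv_family M X I) = sigma_sets (space M) (\<Union>i\<in>I. sets (sigma_rv M (X i)))"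
  unfolding sigma_rv_family_def by (rule sets_measure_of[OF sigma_rv_family_generators_subset])

lemma measurable_sigma_rv_family: "i \<in> I \<Longrightarrow> X i \<in> borel_measurable (sigma_rv_family M X I)"
  by (rule measurableI) (auto simp: sets_sigma_rv_family sets_sigma_rv)

lemma measurable_into_sigma_rv_family:
  assumes "g \<in> space Q \<rightarrow> space M" and "\<And>i. i \<in> I \<Longrightarrow> (\<lambda>\<omega>. X i (g \<omega>)) \<in> borel_measurable Q"
  shows "g \<in> measurable Q (sigma_rv_family M X I)"
  unfolding sigma_rv_family_def
proof (rule measurable_measure_of[OF sigma_rv_family_generators_subset assms(1)])
  fix A assume "A \<in> (\<Union>i\<in>I. sets (sigma_rv M (X i)))"
  then obtain i B where "i \<in> I" "B \<in> sets borel" "A = X i -` B \<inter> space M"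
    by (auto simp: sets_sigma_rv)
  then have "g -` A \<inter> space Q = (\<lambda>\<omega>. X i (g \<omega>)) -` B \<inter> space Q"
    using assms(1) by auto
  then show "g -` A \<inter> space Q \<in> sets Q"
    using assms(2)[OF \<open>i \<in> I\<close>] \<open>B \<in> sets borel\<close> by (simp add: measurable_sets)
qed

theorem sigma_logically_independent_rv_extension:
  fixes X :: "'i \<Rightarrow> 'a \<Rightarrow> real" and N :: "'i \<Rightarrow> 'a measure"
  assumes indep: "sigma_logically_independent_rv M X I" and "countable I" "I \<noteq> {}"
    and N_prob: "\<And>i. i \<in> I \<Longrightarrow> prob_space (N i)"
    and N_space: "\<And>i. i \<in> I \<Longrightarrow> space (N i) = space M"
    and N_sets: "\<And>i. i \<in> I \<Longrightarrow> sets (N i) = sets (sigma_rv M (X i))"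
  shows "\<exists>P. prob_space P \<and> space P = space M \<and> sets P = sets (sigma_rv_family M X I) \<and>
           (\<forall>i\<in>I. distr P borel (X i) = distr (N i) borel (X i)) \<and>
           prob_space.indep_vars P (\<lambda>_. borel) X I"
proof -
  define Q where "Q = (\<Pi>\<^sub>M i\<in>I. N i)"
  interpret Q: prob_space Q
    unfolding Q_def using N_prob by (rule prob_space_PiM)
  have X_N: "X i \<in> borel_measurable (N i)" if "i \<in> I" for i
    using measurable_sigma_rv measurable_cong_sets[OF N_sets[OF that] refl] by blast
  have coord: "(\<lambda>\<omega>. \<omega> i) \<in> measurable Q (N i)" if "i \<in> I" for i
    unfolding Q_def using that by (rule measurable_component_singleton)
  \<comment> \<open>Logical independence lets a single point of the space realise every point of the product.\<close>
  have "\<forall>\<omega>\<in>space Q. \<exists>x\<in>space M. \<forall>i\<in>I. X i x = X i (\<omega> i)"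
    by (intro ballI sigma_logically_independent_rv_common_point[OF indep \<open>countable I\<close> \<open>I \<noteq> {}\<close>])
      (auto simp: Q_def space_PiM N_space dest: PiE_mem)
  then obtain g where g_space: "\<And>\<omega>. \<omega> \<in> space Q \<Longrightarrow> g \<omega> \<in> space M"
    and X_g: "\<And>\<omega> i. \<omega> \<in> space Q \<Longrightarrow> i \<in> I \<Longrightarrow> X i (g \<omega>) = X i (\<omega> i)"
    by metis
  have g_meas: "g \<in> measurable Q (sigma_rv_family M X I)"
  proof (rule measurable_into_sigma_rv_family)
    show "(\<lambda>\<omega>. X i (g \<omega>)) \<in> borel_measurable Q" if "i \<in> I" for i
      using measurable_compose[OF coord X_N, OF that that] X_g that
      by (subst measurable_cong[where g="\<lambda>\<omega>. X i (\<omega> i)"]) auto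
  qed (use g_space in auto)
  define P where "P = distr Q (sigma_rv_family M X I) g"
  have "distr P borel (X i) = distr (N i) borel (X i)" if "i \<in> I" for i
  proof -
    have "distr P borel (X i) = distr Q borel (X i \<circ> g)"
      unfolding P_def using measurable_sigma_rv_family[where X=X and M=M, OF that] g_meas
      by (rule distr_distr)
    also have "\<dots> = distr Q borel (X i \<circ> (\<lambda>\<omega>. \<omega> i))"
      using X_g that by (intro distr_cong refl) auto
    also have "\<dots> = distr (distr Q (N i) (\<lambda>\<omega>. \<omega> i)) borel (X i)"
      using X_N[OF that] coord[OF that] by (rule distr_distr[symmetric])
    also have "distr Q (N i) (\<lambda>\<omega>. \<omega> i) = N i"
      unfolding Q_def using N_prob that by (rule distr_PiM_component)
    finally show ?thesis .
  qed
  moreover have "prob_space.indep_vars P (\<lambda>_. borel) X I"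
    unfolding P_def
  proof (rule Q.indep_vars_distr[OF g_meas measurable_sigma_rv_family])
    have "Q.indep_vars N (\<lambda>i \<omega>. \<omega> i) I"
      unfolding Q_def using N_prob \<open>I \<noteq> {}\<close> by (rule indep_vars_PiM_components)
    then show "Q.indep_vars (\<lambda>_. borel) (\<lambda>i \<omega>. X i (\<omega> i)) I"
      using X_N by (rule Q.indep_vars_compose2)
  qed (use X_g \<open>I \<noteq> {}\<close> in auto)
  moreover have "prob_space P"
    unfolding P_def using g_meas by (rule Q.prob_space_distr)
  ultimately show ?thesis
    by (intro exI[of _ P]) (simp add: P_def)
qed

theorem mainTheorem11:
  fixes M :: "'a measure"
    and X :: "nat \<Rightarrow> 'a \<Rightarrow> real"
    and Pn :: "nat \<Rightarrow> 'a measure"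
  defines "m \<equiv> (\<lambda>i. \<integral>\<omega>. X i \<omega> \<partial>Pn i)"
  defines "B2 \<equiv> (\<lambda>n. \<Sum>i\<in>{1..n}. \<integral>\<omega>. (X i \<omega> - m i)\<^sup>2 \<partial>Pn i)"
  assumes X_meas: "\<And>i. i \<ge> 1 \<Longrightarrow> X i \<in> borel_measurable M"
    and indep: "sigma_logically_independent_rv M X {1..}"
    and P_prob: "\<And>i. i \<ge> 1 \<Longrightarrow> prob_space (Pn i)"
    and P_space: "\<And>i. i \<ge> 1 \<Longrightarrow> space (Pn i) = space M"
    and P_sets: "\<And>i. i \<ge> 1 \<Longrightarrow> sets (Pn i) = sets (sigma_rv M (X i))"
    and P_var: "\<And>i. i \<ge> 1 \<Longrightarrow> integrable (Pn i) (\<lambda>\<omega>. (X i \<omega>)\<^sup>2)"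
    and B_inf: "filterlim B2 at_top sequentially"
    and Lindeberg: "\<And>\<epsilon>::real. \<epsilon> > 0 \<Longrightarrow>
       (\<lambda>n. (1 / B2 n) * (\<Sum>i\<in>{1..n}. \<integral>\<omega>. (X i \<omega> - m i)\<^sup>2 *
            indicator {\<omega>. \<bar>X i \<omega> - m i\<bar> > \<epsilon> * sqrt (B2 n)} \<omega> \<partial>Pn i))
        \<longlonglongrightarrow> 0"
  shows "\<exists>P. prob_space P \<and> space P = space M \<and>
           sets P = sigma_sets (space M) (\<Union>i\<in>{1..}. sets (sigma_rv M (X i))) \<and>
           (\<forall>i\<ge>1. integrable P (X i)) \<and>
           (\<forall>x::real. (\<lambda>n. measure P {\<omega>\<in>space P.
                (\<Sum>i\<in>{1..n}. X i \<omega> - (\<integral>\<omega>'. X i \<omega>' \<partial>P)) / sqrt (B2 n) \<le> x})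
              \<longlonglongrightarrow> (LBINT t:{..x}. exp (- (t\<^sup>2) / 2) / sqrt (2 * pi)))"
proof -
  obtain P where P: "prob_space P" "space P = space M" "sets P = sets (sigma_rv_family M X {1..})"
    and marginals: "\<And>i. i \<in> {1..} \<Longrightarrow> distr P borel (X i) = distr (Pn i) borel (X i)"
    and indep_P: "prob_space.indep_vars P (\<lambda>_. borel) X {1..}"
    using sigma_logically_independent_rv_extension[OF indep, of Pn] P_prob P_space P_sets by auto
  interpret P: prob_space P
    by (fact P(1))
  have X_Pn: "X i \<in> borel_measurable (Pn i)" if "1 \<le> i" for i
    using measurable_sigma_rv measurable_cong_sets[OF P_sets[OF that] refl] by blast
  have "integrable P (X i)" if "1 \<le> i" for i
  proof -
    have "integrable (Pn i) (X i)"
      using finite_measure.square_integrable_imp_integrable[OF _ X_Pn P_var] P_prob that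
      by (simp add: prob_space_def)
    then show ?thesis
      using integrable_comp_iff_of_distr_eq[where f="\<lambda>x. x", OF marginals _ X_Pn] indep_P that
      unfolding P.indep_vars_def2 by simp
  qed
  moreover have "(\<lambda>n. measure P {\<omega> \<in> space P. (\<Sum>i\<in>{1..n}. X i \<omega> - P.expectation (X i)) / sqrt (B2 n) \<le> x})
      \<longlonglongrightarrow> (LBINT t:{..x}. exp (- t\<^sup>2 / 2) / sqrt (2 * pi))" for x
    unfolding B2_def m_def
    using P.lindeberg_clt_cdf_marginals[OF indep_P marginals X_Pn P_var B_inf[unfolded B2_def m_def]
        Lindeberg[unfolded B2_def m_def]] .
  ultimately show ?thesis
    using P by (intro exI[of _ P]) (auto simp: sets_sigma_rv_family)
qed

end
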